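(* Let $$P=\begin{bmatrix} x_1 & x_2 & x_3 & x_4 & x_5 & x_6 & x_7 & x_8\\ 3x_1-x_2 & -x_1 & 3x_3-x_4 & -x_3 & 3x_5-x_6 & -x_5 & 3x_7-x_8 & -x_7\\ 3x_3 & 3x_4 & x_1 & x_2 & 3x_7 & 3x_8 & x_5 & x_6\\ 9x_3-3x_4 & -3x_3 & 3x_1-x_2 & -x_1 & 9x_7-3x_8 & -3x_7 & 3x_5-x_6 & -x_5\\ 14x_5 & 14x_6 & 14x_7 & 14x_8 & x_1 & x_2 & x_3 & x_4\\ 42x_5-14x_6 & -14x_5 & 42x_7-14x_8 & -14x_7 & 3x_1-x_2 & -x_1 & 3x_3-x_4 & -x_3\\ 42x_7 & 42x_8 & 14x_5 & 14x_6 & 3x_3 & 3x_4 & x_1 & x_2\\ 126x_7-42x_8 & -42x_7 & 42x_5-14x_6 & -14x_5 & 9x_3-3x_4 & -3x_3 & 3x_1-x_2 & -x_1\end{bmatrix}.$$ Then the octic diophantine equation $\det P=1$ in the unknowns $x_1,\dots,x_8$ has infinitely many solutions in positive integers (one of them being $(2,6,1,3,7,21,4,12)$). *)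

theory Defs
  imports "HOL-Analysis.Analysis"
begin

text \<open>The 8x8 integer matrix P(x1,...,x8) of the paper; row i of the paper is
  the i-th list below (the library's vector construction places the k-th list
  entry at index k, k = 1..8).\<close>
definition Pmat :: "int \<Rightarrow> int \<Rightarrow> int \<Rightarrow> int \<Rightarrow> int \<Rightarrow> int \<Rightarrow> int \<Rightarrow> int \<Rightarrow> int^8^8" where
  "Pmat x1 x2 x3 x4 x5 x6 x7 x8 = vector [
     vector [x1, x2, x3, x4, x5, x6, x7, x8],
     vector [3*x1-x2, -x1, 3*x3-x4, -x3, 3*x5-x6, -x5, 3*x7-x8, -x7],
     vector [3*x3, 3*x4, x1, x2, 3*x7, 3*x8, x5, x6],
     vector [9*x3-3*x4, -3*x3, 3*x1-x2, -x1, 9*x7-3*x8, -3*x7, 3*x5-x6, -x5],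
     vector [14*x5, 14*x6, 14*x7, 14*x8, x1, x2, x3, x4],
     vector [42*x5-14*x6, -14*x5, 42*x7-14*x8, -14*x7, 3*x1-x2, -x1, 3*x3-x4, -x3],
     vector [42*x7, 42*x8, 14*x5, 14*x6, 3*x3, 3*x4, x1, x2],
     vector [126*x7-42*x8, -42*x7, 42*x5-14*x6, -14*x5, 9*x3-3*x4, -3*x3, 3*x1-x2, -x1]]"

end

theory Submission imports Defs begin

text \<open>Write \<open>P(v)\<close> for the matrix of the theorem and \<open>E\<close> for the block-diagonal matrix with
  four blocks \<open>[[1,0],[3,-1]]\<close>. The matrices \<open>P(v)\<close> are closed under the twisted product
  \<open>P(v) E P(w) = P(v E P(w))\<close>, and \<open>det E = 1\<close>. Hence for the solution
  \<open>u = (2,6,1,3,7,21,4,12)\<close> the map \<open>v \<mapsto> v E P(u)\<close> sends solutions to solutions; as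
  \<open>E P(u)\<close> has positive entries, it preserves positivity and strictly increases the first
  coordinate, so there are infinitely many positive solutions.\<close>

lemma exhaust_8:
  fixes x :: 8
  shows "x = 1 \<or> x = 2 \<or> x = 3 \<or> x = 4 \<or> x = 5 \<or> x = 6 \<or> x = 7 \<or> x = 8"
proof (induct x)
  case (of_int z)
  then have "z = 0 \<or> z = 1 \<or> z = 2 \<or> z = 3 \<or> z = 4 \<or> z = 5 \<or> z = 6 \<or> z = 7"
    by fastforce
  then show ?case by auto
qed

lemma UNIV_8: "UNIV = {1, 2, 3, 4, 5, 6, 7, 8::8}"
  using exhaust_8 by auto

lemma sum_8: "sum f (UNIV::8 set) = f 1 + f 2 + f 3 + f 4 + f 5 + f 6 + f 7 + f 8"
  unfolding UNIV_8 by (simp add: ac_simps)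

lemma prod_8: "prod f (UNIV::8 set) = f 1 * f 2 * f 3 * f 4 * f 5 * f 6 * f 7 * f 8"
  unfolding UNIV_8 by (simp add: ac_simps)

lemma forall_8: "(\<forall>i::8. P i) \<longleftrightarrow> P 1 \<and> P 2 \<and> P 3 \<and> P 4 \<and> P 5 \<and> P 6 \<and> P 7 \<and> P 8"
  by (metis exhaust_8)

lemma vector_8 [simp]:
  "(vector [a,b,c,d,e,f,g,h] :: 'a::zero^8) $ 1 = a"
  "(vector [a,b,c,d,e,f,g,h] :: 'a::zero^8) $ 2 = b"
  "(vector [a,b,c,d,e,f,g,h] :: 'a::zero^8) $ 3 = c"
  "(vector [a,b,c,d,e,f,g,h] :: 'a::zero^8) $ 4 = d"
  "(vector [a,b,c,d,e,f,g,h] :: 'a::zero^8) $ 5 = e"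
  "(vector [a,b,c,d,e,f,g,h] :: 'a::zero^8) $ 6 = f"
  "(vector [a,b,c,d,e,f,g,h] :: 'a::zero^8) $ 7 = g"
  "(vector [a,b,c,d,e,f,g,h] :: 'a::zero^8) $ 8 = h"
  unfolding vector_def by simp_all

text \<open>In the numeral type \<open>8\<close> the element \<open>8\<close> is \<open>0\<close>, so the index order is
  \<open>8 < 1 < 2 < \<dots> < 7\<close>. Triangularity of the determinant certificates below is
  with respect to this order, which is why they have stray entries in row and column 8.\<close>

lemma Rep_bit0_8:
  "Rep_bit0 (1::8) = 1" "Rep_bit0 (2::8) = 2" "Rep_bit0 (3::8) = 3" "Rep_bit0 (4::8) = 4"
  "Rep_bit0 (5::8) = 5" "Rep_bit0 (6::8) = 6" "Rep_bit0 (7::8) = 7" "Rep_bit0 (8::8) = 0"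
  by (simp_all add: bit0.Rep_numeral bit0.Rep_1)

lemma det_lower_mult_eq_upper:
  fixes L A U :: "'a::comm_ring_1^'n::{finite,wellorder}^'n::{finite,wellorder}"
  assumes "L ** A = U"
    and "\<forall>i j. i < j \<longrightarrow> L$i$j = 0"
    and "\<forall>i j. j < i \<longrightarrow> U$i$j = 0"
  shows "prod (\<lambda>i. L$i$i) UNIV * det A = prod (\<lambda>i. U$i$i) UNIV"
  using det_mul[of L A] det_lowerdiagonal[of L] det_upperdiagonal[of U] assms by auto

definition pvec :: "int^8 \<Rightarrow> int^8^8" where
  "pvec v = Pmat (v$1) (v$2) (v$3) (v$4) (v$5) (v$6) (v$7) (v$8)"

definition twist :: "int^8^8" where "twist = vector [
  vector [1,  0, 0,  0, 0,  0, 0,  0],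
  vector [3, -1, 0,  0, 0,  0, 0,  0],
  vector [0,  0, 1,  0, 0,  0, 0,  0],
  vector [0,  0, 3, -1, 0,  0, 0,  0],
  vector [0,  0, 0,  0, 1,  0, 0,  0],
  vector [0,  0, 0,  0, 3, -1, 0,  0],
  vector [0,  0, 0,  0, 0,  0, 1,  0],
  vector [0,  0, 0,  0, 0,  0, 3, -1]]"

lemma pvec_twist_mult: "pvec v ** twist ** pvec w = pvec (v v* (twist ** pvec w))"
  unfolding pvec_def Pmat_def twist_def
  by (simp add: vec_eq_iff forall_8 matrix_matrix_mult_def vector_matrix_mult_def sum_8
      ring_distribs)

lemma det_twist: "det twist = 1"
proof -
  define L :: "int^8^8" where "L = vector [
    vector [ 1, 0,  0, 0,  0, 0, 0, 0],
    vector [-3, 1,  0, 0,  0, 0, 0, 0],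
    vector [ 0, 0,  1, 0,  0, 0, 0, 0],
    vector [ 0, 0, -3, 1,  0, 0, 0, 0],
    vector [ 0, 0,  0, 0,  1, 0, 0, 0],
    vector [ 0, 0,  0, 0, -3, 1, 0, 0],
    vector [ 0, 0,  0, 0,  0, 0, 1, 0],
    vector [ 0, 0,  0, 0,  0, 0, 0, 1]]"
  define U :: "int^8^8" where "U = vector [
    vector [1,  0, 0,  0, 0,  0, 0,  0],
    vector [0, -1, 0,  0, 0,  0, 0,  0],
    vector [0,  0, 1,  0, 0,  0, 0,  0],
    vector [0,  0, 0, -1, 0,  0, 0,  0],
    vector [0,  0, 0,  0, 1,  0, 0,  0],
    vector [0,  0, 0,  0, 0, -1, 0,  0],
    vector [0,  0, 0,  0, 0,  0, 1,  0],
    vector [0,  0, 0,  0, 0,  0, 3, -1]]"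
  have "prod (\<lambda>i. L$i$i) UNIV * det twist = prod (\<lambda>i. U$i$i) UNIV"
  proof (rule det_lower_mult_eq_upper)
    show "L ** twist = U" unfolding L_def twist_def U_def
      by (simp add: vec_eq_iff forall_8 matrix_matrix_mult_def sum_8)
  qed (simp_all add: L_def U_def less_bit0_def Rep_bit0_8 forall_8)
  then show ?thesis unfolding L_def U_def by (simp add: prod_8)
qed

definition base_solution :: "int^8" where
  "base_solution = vector [2, 6, 1, 3, 7, 21, 4, 12]"

lemma det_pvec_base_solution: "det (pvec base_solution) = 1"
proof -
  define L :: "int^8^8" where "L = vector [
    vector [     1,      0,     0,      0,    0,     0,   0,    6],
    vector [     0,      1,     0,      0,    0,     0,   0,   -2],
    vector [  -501,    252,   334,      0,    0,     0,   0,   -3],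
    vector [     0,   -585,     0,    334,    0,     0,   0,    1],
    vector [-10136, -26334, -5068, -17556,  362,     0,   0,  627],
    vector [     0,  -1358,     0,    784,    0,   362,   0, -209],
    vector [  2352,   7056, -1358,  -4074, -627, -1881, 362, 1086],
    vector [     0,      0,     0,      0,    0,     0,   0,    1]]"
  define U :: "int^8^8" where "U = vector [
    vector [2, -1002,   1, -585,       7,   3,      4,  0],
    vector [0,   334,   0,  195,       0,  -1,      0,  0],
    vector [0,     0, 167,  543,     501, -252,   334,  0],
    vector [0,     0,   0, -181,       0,  84,      0,  0],
    vector [0,     0,   0,    0, -131044,  -3, -75658,  0],
    vector [0,     0,   0,    0,       0,   1,      0,  0],
    vector [0,     0,   0,    0,       0,   0,     -1,  0],
    vector [0,  -168,   0,  -98,       0,  -3,      0, -2]]"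
  have "prod (\<lambda>i. L$i$i) UNIV * det (pvec base_solution) = prod (\<lambda>i. U$i$i) UNIV"
  proof (rule det_lower_mult_eq_upper)
    show "L ** pvec base_solution = U" unfolding L_def U_def pvec_def base_solution_def Pmat_def
      by (simp add: vec_eq_iff forall_8 matrix_matrix_mult_def sum_8)
  qed (simp_all add: L_def U_def less_bit0_def Rep_bit0_8 forall_8)
  then show ?thesis unfolding L_def U_def by (simp add: prod_8)
qed

definition step_matrix :: "int^8^8" where
  "step_matrix = twist ** pvec base_solution"

lemma det_step_matrix: "det step_matrix = 1"
  by (simp add: step_matrix_def det_mul det_twist det_pvec_base_solution)

lemma step_matrix_pos: "0 < step_matrix$i$j"
proof -
  have "\<forall>i j. 0 < step_matrix$i$j"
    unfolding step_matrix_def twist_def pvec_def base_solution_def Pmat_def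
    by (simp add: forall_8 matrix_matrix_mult_def sum_8)
  then show ?thesis by blast
qed

lemma step_matrix_1_1: "step_matrix$1$1 = 2"
  unfolding step_matrix_def twist_def pvec_def base_solution_def Pmat_def
  by (simp add: matrix_matrix_mult_def sum_8)

definition solutions :: "(int^8) set" where
  "solutions = {v. (\<forall>i. 0 < v$i) \<and> det (pvec v) = 1}"

lemma step_solution:
  assumes "v \<in> solutions"
  shows "v v* step_matrix \<in> solutions" and "v$1 < (v v* step_matrix)$1"
proof -
  have pos: "0 < v$i" for i
    using assms by (simp add: solutions_def)
  have "pvec (v v* step_matrix) = pvec v ** step_matrix"
    by (simp add: step_matrix_def pvec_twist_mult matrix_mul_assoc)
  then have "det (pvec (v v* step_matrix)) = 1"
    using assms by (simp add: det_mul det_step_matrix solutions_def)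
  moreover have "0 < (v v* step_matrix)$j" for j
    unfolding vector_matrix_mult_def
    by (simp add: sum_pos pos step_matrix_pos)
  ultimately show "v v* step_matrix \<in> solutions"
    by (simp add: solutions_def)
  have "v$1 < v$1 * step_matrix$1$1"
    using pos[of 1] by (simp add: step_matrix_1_1)
  also have "\<dots> \<le> (v v* step_matrix)$1"
    unfolding vector_matrix_mult_def vec_lambda_beta
    by (rule member_le_sum) (simp_all add: pos step_matrix_pos less_imp_le)
  finally show "v$1 < (v v* step_matrix)$1" .
qed

lemma infinite_solutions: "infinite solutions"
proof -
  have "base_solution \<in> solutions"
    using det_pvec_base_solution by (simp add: solutions_def base_solution_def forall_8)
  moreover have "\<exists>y\<in>(\<lambda>v. v$1) ` solutions. x < y" if "x \<in> (\<lambda>v. v$1) ` solutions" for x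
    using that step_solution by blast
  ultimately have "infinite ((\<lambda>v. v$1) ` solutions)"
    by (intro infinite_growing) auto
  then show ?thesis by blast
qed

theorem mainTheorem15:
  shows "infinite {(x1::int, x2::int, x3::int, x4::int, x5::int, x6::int, x7::int, x8::int).
            0 < x1 \<and> 0 < x2 \<and> 0 < x3 \<and> 0 < x4 \<and> 0 < x5 \<and> 0 < x6 \<and> 0 < x7 \<and> 0 < x8 \<and>
            det (Pmat x1 x2 x3 x4 x5 x6 x7 x8) = 1}"
proof -
  let ?tuple = "\<lambda>v::int^8. (v$1, v$2, v$3, v$4, v$5, v$6, v$7, v$8)"
  have "inj ?tuple"
    by (rule injI) (simp add: vec_eq_iff forall_8)
  then have "infinite (?tuple ` solutions)"
    using infinite_solutions finite_imageD inj_on_subset by blast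
  moreover have "?tuple ` solutions \<subseteq> {(x1, x2, x3, x4, x5, x6, x7, x8).
            0 < x1 \<and> 0 < x2 \<and> 0 < x3 \<and> 0 < x4 \<and> 0 < x5 \<and> 0 < x6 \<and> 0 < x7 \<and> 0 < x8 \<and>
            det (Pmat x1 x2 x3 x4 x5 x6 x7 x8) = 1}"
    by (auto simp: solutions_def pvec_def)
  ultimately show ?thesis
    using infinite_super by blast
qed

end
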